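(* Let $X=\{a_1,\dots,a_\ell\}$ be a finite set of $\ell$ distinct points and $N\ge 2$. A probability measure $\mu$ on $X^2$ is an extreme point of the convex set $\mathcal{P}_{N\text{-}rep}(X^2)$ of $N$-representable two-point probability measures if and only if it is of the form $$\mu=\lambda\otimes\lambda+\frac1{N-1}\Big(\lambda\otimes\lambda-\sum_{i=1}^\ell\lambda_i\,\delta_i\otimes\delta_i\Big)$$ for some $\lambda\in\mathcal{P}_{\frac1N}(X)$.
   Context: $\mathcal{P}(X)$ denotes the probability measures on $X$, identified with vectors $(\lambda_1,\dots,\lambda_\ell)$ where $\lambda_i=\lambda(\{a_i\})$; $\delta_i$ is the Dirac measure at $a_i$. $\mathcal{P}_{\frac1N}(X)=\{\lambda\in\mathcal{P}(X):\lambda_i\in\frac1N\mathbb{Z}\ \forall i\}$. A probability measure $\gamma$ on $X^N$ is symmetric if $\gamma(A_1\times\cdots\times A_N)=\gamma(A_{\sigma(1)}\times\cdots\times A_{\sigma(N)})$ for all $A_i\subseteq X$ and permutations $\sigma$. A probability measure $\mu$ on $X^2$ is $N$-representable if there is a symmetric probability measure $\gamma$ on $X^N$ with two-point marginal $\gamma(A\times X^{N-2})=\mu(A)$ for all $A\subseteq X^2$; $\mathcal{P}_{N\text{-}rep}(X^2)$ denotes the set of such $\mu$. *)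

theory Defs
  imports "HOL-Analysis.Analysis"
begin

text \<open>The finite ground set X = {a_1,...,a_l} is the finite type 'a (l = CARD('a)).
Measures on X are vectors in real^'a, measures on X^2 vectors in real^('a \<times> 'a).
Points of X^N are lists of length N; a probability measure on the finite set X^N is a
nonnegative weight function on these lists with total mass 1.\<close>

definition prob_meas :: "(real^'a::finite) set" where
  "prob_meas = {lam. (\<forall>i. 0 \<le> lam $ i) \<and> (\<Sum>i\<in>UNIV. lam $ i) = 1}"

definition prob_meas_grid :: "nat \<Rightarrow> (real^'a::finite) set" where
  "prob_meas_grid N = {lam \<in> prob_meas. \<forall>i. real N * lam $ i \<in> \<int>}"

definition symmetric_meas :: "nat \<Rightarrow> ('a list \<Rightarrow> real) \<Rightarrow> bool" where
  "symmetric_meas N \<gamma> \<longleftrightarrow>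
     (\<forall>xs \<sigma>. length xs = N \<longrightarrow> \<sigma> permutes {..<N} \<longrightarrow>
        \<gamma> (map (\<lambda>k. xs ! \<sigma> k) [0..<N]) = \<gamma> xs)"

definition prob_meas_XN :: "nat \<Rightarrow> ('a list \<Rightarrow> real) \<Rightarrow> bool" where
  "prob_meas_XN N \<gamma> \<longleftrightarrow>
     (\<forall>xs. length xs = N \<longrightarrow> 0 \<le> \<gamma> xs) \<and> (\<Sum>xs\<in>{xs. length xs = N}. \<gamma> xs) = 1"

definition two_point_marginal :: "nat \<Rightarrow> ('a::finite list \<Rightarrow> real) \<Rightarrow> real^('a \<times> 'a)" where
  "two_point_marginal N \<gamma> =
     (\<chi> p. \<Sum>xs\<in>{xs. length xs = N \<and> xs ! 0 = fst p \<and> xs ! 1 = snd p}. \<gamma> xs)"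

definition N_rep :: "nat \<Rightarrow> (real^('a::finite \<times> 'a)) set" where
  "N_rep N = {mu. \<exists>\<gamma>. prob_meas_XN N \<gamma> \<and> symmetric_meas N \<gamma> \<and> mu = two_point_marginal N \<gamma>}"

end

theory Submission
  imports Defs "HOL-Combinatorics.Permutations"
begin

text \<open>A symmetric measure on \<open>X\<^sup>N\<close> is a convex combination of symmetrised Dirac measures
\<open>\<delta>\<^sub>x\<close>, \<open>x \<in> X\<^sup>N\<close>, and the two-point marginal of the symmetrisation of \<open>\<delta>\<^sub>x\<close> depends only
on the empirical measure \<open>\<lambda>\<close> of \<open>x\<close>, a point of the grid \<open>prob_meas_grid N\<close>: it is the measure \<open>M(\<lambda>)\<close> of the
theorem. Hence the \<open>N\<close>-representable measures form the polytope spanned by the finitely many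
\<open>M(\<lambda>)\<close>, and every extreme point is one of them. Conversely each \<open>M(\<lambda>\<^sub>0)\<close> is exposed: for a
suitable linear functional \<open>w\<close> one has \<open>w \<bullet> M(\<lambda>) = c |\<lambda> - \<lambda>\<^sub>0|\<^sup>2 + const\<close> with \<open>c > 0\<close>,
which is uniquely minimised at \<open>\<lambda> = \<lambda>\<^sub>0\<close>.\<close>

lemma finite_lists_length: "finite {xs :: 'a::finite list. length xs = N}"
  using finite_lists_length_eq[of "UNIV :: 'a set" N] by simp

lemma count_list_eq_sum_nth:
  "real (count_list xs a) = (\<Sum>k<length xs. of_bool (xs ! k = a))"
  by (induction xs) (simp_all add: sum.lessThan_Suc_shift del: sum.lessThan_Suc)

lemma ordered_pair_count:
  fixes xs :: "'a list"
  shows "(\<Sum>k<length xs. \<Sum>l\<in>{..<length xs} - {k}. of_bool (xs ! k = i) * of_bool (xs ! l = j))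
    = real (count_list xs i) * real (count_list xs j) - of_bool (i = j) * real (count_list xs i)"
proof -
  have "(\<Sum>k<length xs. \<Sum>l\<in>{..<length xs} - {k}. of_bool (xs ! k = i) * of_bool (xs ! l = j))
      = (\<Sum>k<length xs. of_bool (xs ! k = i) * (real (count_list xs j) - of_bool (xs ! k = j)))"
    by (intro sum.cong refl)
      (simp add: sum_distrib_left[symmetric] sum_diff1 count_list_eq_sum_nth del: sum_of_bool_eq)
  also have "\<dots> = (\<Sum>k<length xs. of_bool (xs ! k = i) * real (count_list xs j)
                    - of_bool (i = j) * of_bool (xs ! k = i))"
    by (intro sum.cong refl) auto
  also have "\<dots> = real (count_list xs i) * real (count_list xs j) - of_bool (i = j) * real (count_list xs i)"
    by (simp add: sum_subtractf sum_distrib_left[symmetric] sum_distrib_right[symmetric]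
        count_list_eq_sum_nth del: sum_of_bool_eq sum_mult_of_bool_eq sum_of_bool_mult_eq)
  finally show ?thesis .
qed

lemma permutes_with_values_at_0_1:
  fixes k l N :: nat
  assumes "k < N" "l < N" "k \<noteq> l"
  obtains \<sigma> where "\<sigma> permutes {..<N}" "\<sigma> 0 = k" "\<sigma> 1 = l"
proof -
  define l' where "l' = Transposition.transpose 0 k l"
  define \<sigma> where "\<sigma> = Transposition.transpose 0 k \<circ> Transposition.transpose 1 l'"
  have "1 < N" using assms by linarith
  have "l' < N" "l' \<noteq> 0"
    using assms unfolding l'_def by (auto simp: Transposition.transpose_def)
  with \<open>1 < N\<close> have "\<sigma> permutes {..<N}"
    using assms unfolding \<sigma>_def by (intro permutes_compose permutes_swap_id) auto
  moreover have "\<sigma> 0 = k" "\<sigma> 1 = l"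
    using assms \<open>l' \<noteq> 0\<close> unfolding \<sigma>_def l'_def by (auto simp: Transposition.transpose_def)
  ultimately show thesis by (rule that)
qed

lemma symmetric_meas_permute_list:
  assumes "symmetric_meas N \<gamma>" "\<sigma> permutes {..<N}" "length xs = N"
  shows "\<gamma> (permute_list \<sigma> xs) = \<gamma> xs"
  using assms by (simp add: symmetric_meas_def permute_list_def)

lemma sum_symmetric_meas_permute_list:
  assumes sym: "symmetric_meas N \<gamma>" and \<sigma>: "\<sigma> permutes {..<N}"
  shows "(\<Sum>xs | length xs = N. \<gamma> xs * f (permute_list \<sigma> xs)) = (\<Sum>xs | length xs = N. \<gamma> xs * f xs)"
proof (rule sum.reindex_bij_witness[where i = "permute_list (inv \<sigma>)" and j = "permute_list \<sigma>"])
  have inv: "inv \<sigma> permutes {..<N}" using \<sigma> by (rule permutes_inv)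
  fix xs :: "'a list" assume "xs \<in> {xs. length xs = N}"
  then have len: "length xs = N" by simp
  have "permute_list (inv \<sigma>) (permute_list \<sigma> xs) = permute_list (\<sigma> \<circ> inv \<sigma>) xs"
    using inv len by (simp add: permute_list_compose)
  then show "permute_list (inv \<sigma>) (permute_list \<sigma> xs) = xs"
    using \<sigma> by (simp add: permutes_inv_o)
  have "permute_list \<sigma> (permute_list (inv \<sigma>) xs) = permute_list (inv \<sigma> \<circ> \<sigma>) xs"
    using \<sigma> len by (simp add: permute_list_compose)
  then show "permute_list \<sigma> (permute_list (inv \<sigma>) xs) = xs"
    using \<sigma> by (simp add: permutes_inv_o)
  show "permute_list \<sigma> xs \<in> {xs. length xs = N}" "permute_list (inv \<sigma>) xs \<in> {xs. length xs = N}"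
    using len by simp_all
  show "\<gamma> (permute_list \<sigma> xs) * f (permute_list \<sigma> xs) = \<gamma> xs * f (permute_list \<sigma> xs)"
    using symmetric_meas_permute_list[OF sym \<sigma> len] by simp
qed

lemma sum_symmetric_meas_nth_pair:
  assumes sym: "symmetric_meas N \<gamma>" and kl: "k < N" "l < N" "k \<noteq> l"
  shows "(\<Sum>xs | length xs = N. \<gamma> xs * f (xs ! k) (xs ! l))
       = (\<Sum>xs | length xs = N. \<gamma> xs * f (xs ! 0) (xs ! 1))"
proof -
  obtain \<sigma> where \<sigma>: "\<sigma> permutes {..<N}" "\<sigma> 0 = k" "\<sigma> 1 = l"
    using permutes_with_values_at_0_1[OF kl] .
  have "1 < N" using kl by linarith
  then have "(\<Sum>xs | length xs = N. \<gamma> xs * f (xs ! k) (xs ! l))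
      = (\<Sum>xs | length xs = N. \<gamma> xs * (\<lambda>ys. f (ys ! 0) (ys ! 1)) (permute_list \<sigma> xs))"
    using \<sigma> by (intro sum.cong refl) (simp add: permute_list_nth)
  also have "\<dots> = (\<Sum>xs | length xs = N. \<gamma> xs * f (xs ! 0) (xs ! 1))"
    by (rule sum_symmetric_meas_permute_list[OF sym \<sigma>(1)])
  finally show ?thesis .
qed

definition empirical_meas :: "nat \<Rightarrow> 'a::finite list \<Rightarrow> real^'a" where
  "empirical_meas N xs = (\<chi> a. real (count_list xs a) / real N)"

text \<open>The two-point marginal of the symmetrisation of \<open>\<delta>\<^sub>x\<close> for any \<open>x\<close> with empirical
measure \<open>lam\<close> (see \<open>two_point_marginal_symmetric\<close>).\<close>

definition symmetrized_pair_meas :: "nat \<Rightarrow> real^'a::finite \<Rightarrow> real^('a \<times> 'a)" where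
  "symmetrized_pair_meas N lam = (\<chi> p. lam $ fst p * lam $ snd p
     + (1 / (real N - 1)) * (lam $ fst p * lam $ snd p - (if fst p = snd p then lam $ fst p else 0)))"

lemma symmetrized_pair_meas_empirical_meas:
  assumes "N \<ge> 2"
  shows "symmetrized_pair_meas N (empirical_meas N xs) $ (i, j)
    = (real (count_list xs i) * real (count_list xs j) - of_bool (i = j) * real (count_list xs i))
      / (real N * (real N - 1))"
proof -
  have "real N - 1 \<noteq> 0" "real N \<noteq> 0" using assms by auto
  then show ?thesis
    unfolding symmetrized_pair_meas_def empirical_meas_def by (simp add: field_simps)
qed

text \<open>By symmetry all ordered pairs of distinct positions have the law of positions 0 and 1, so
the marginal is the average over the \<open>N (N - 1)\<close> such pairs, which is a count of letters.\<close>

lemma two_point_marginal_symmetric: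
  fixes \<gamma> :: "'a::finite list \<Rightarrow> real"
  assumes sym: "symmetric_meas N \<gamma>" and N: "N \<ge> 2"
  shows "two_point_marginal N \<gamma>
    = (\<Sum>xs | length xs = N. \<gamma> xs *\<^sub>R symmetrized_pair_meas N (empirical_meas N xs))"
proof (rule vec_eq_iff[THEN iffD2], rule allI)
  fix p :: "'a \<times> 'a"
  obtain i j where p: "p = (i, j)" by (cases p)
  define T where "T k l = (\<Sum>xs | length xs = N. \<gamma> xs * (of_bool (xs ! k = i) * of_bool (xs ! l = j)))"
    for k l
  have "T 0 1 = (\<Sum>xs | length xs = N. if xs ! 0 = i \<and> xs ! 1 = j then \<gamma> xs else 0)"
    unfolding T_def by (intro sum.cong) auto
  also have "\<dots> = sum \<gamma> {xs \<in> {xs. length xs = N}. xs ! 0 = i \<and> xs ! 1 = j}"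
    by (rule sum.inter_filter[OF finite_lists_length, symmetric])
  finally have marginal: "two_point_marginal N \<gamma> $ p = T 0 1"
    unfolding two_point_marginal_def p by (simp add: conj_assoc)
  have "(\<Sum>k<N. \<Sum>l\<in>{..<N} - {k}. T k l) = (\<Sum>k<N. \<Sum>l\<in>{..<N} - {k}. T 0 1)"
    unfolding T_def by (intro sum.cong refl sum_symmetric_meas_nth_pair[OF sym]) auto
  also have "\<dots> = real N * (real N - 1) * T 0 1"
    using N by (simp add: of_nat_diff)
  finally have all_pairs: "(\<Sum>k<N. \<Sum>l\<in>{..<N} - {k}. T k l) = real N * (real N - 1) * T 0 1" .
  have "(\<Sum>k<N. \<Sum>l\<in>{..<N} - {k}. T k l)
      = (\<Sum>xs | length xs = N. \<gamma> xs *
           (\<Sum>k<N. \<Sum>l\<in>{..<N} - {k}. of_bool (xs ! k = i) * of_bool (xs ! l = j)))"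
    unfolding T_def sum_distrib_left
    by (subst sum.swap, subst (2) sum.swap) (rule refl)
  also have "\<dots> = (\<Sum>xs | length xs = N. \<gamma> xs * (real N * (real N - 1)
                      * symmetrized_pair_meas N (empirical_meas N xs) $ (i, j)))"
  proof (intro sum.cong refl arg_cong2[where f = "(*)"])
    fix xs :: "'a list" assume "xs \<in> {xs. length xs = N}"
    then show "(\<Sum>k<N. \<Sum>l\<in>{..<N} - {k}. of_bool (xs ! k = i) * of_bool (xs ! l = j))
        = real N * (real N - 1) * symmetrized_pair_meas N (empirical_meas N xs) $ (i, j)"
      using ordered_pair_count[of xs i j] symmetrized_pair_meas_empirical_meas[OF N, of xs i j] N
      by (simp del: sum_of_bool_eq sum_mult_of_bool_eq sum_of_bool_mult_eq)
  qed
  also have "\<dots> = real N * (real N - 1)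
      * (\<Sum>xs | length xs = N. \<gamma> xs * symmetrized_pair_meas N (empirical_meas N xs) $ (i, j))"
    by (simp add: sum_distrib_left ac_simps)
  finally have "T 0 1 = (\<Sum>xs | length xs = N. \<gamma> xs * symmetrized_pair_meas N (empirical_meas N xs) $ (i, j))"
    using all_pairs N by simp
  then show "two_point_marginal N \<gamma> $ p
    = (\<Sum>xs | length xs = N. \<gamma> xs *\<^sub>R symmetrized_pair_meas N (empirical_meas N xs)) $ p"
    using marginal p by simp
qed

lemma empirical_meas_permute_list:
  assumes "\<sigma> permutes {..<length xs}"
  shows "empirical_meas N (permute_list \<sigma> xs) = empirical_meas N xs"
  using mset_permute_list[OF assms] by (simp add: empirical_meas_def flip: count_mset)

lemma sum_count_list_UNIV: "(\<Sum>a\<in>UNIV. count_list xs (a::'a::finite)) = length xs"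
  by (rule sum_count_set) simp_all

lemma empirical_meas_in_prob_meas_grid:
  assumes "length xs = N" "N \<ge> 1"
  shows "empirical_meas N xs \<in> prob_meas_grid N"
proof -
  have N: "real N \<noteq> 0" using assms(2) by simp
  then have "(\<Sum>a\<in>UNIV. empirical_meas N xs $ a) = 1"
    using assms(1) sum_count_list_UNIV[of xs]
    by (simp add: empirical_meas_def flip: sum_divide_distrib of_nat_sum)
  then show ?thesis
    using N by (simp add: prob_meas_grid_def prob_meas_def empirical_meas_def)
qed

lemma ex_empirical_meas_eq:
  fixes lam :: "real^'a::finite"
  assumes lam: "lam \<in> prob_meas_grid N" and N: "N \<ge> 1"
  shows "\<exists>xs. length xs = N \<and> empirical_meas N xs = lam"
proof -
  define n where "n a = nat \<lfloor>real N * lam $ a\<rfloor>" for a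
  have n: "real (n a) = real N * lam $ a" for a
  proof -
    have "real N * lam $ a \<in> \<int>" "0 \<le> real N * lam $ a"
      using lam by (auto simp: prob_meas_grid_def prob_meas_def)
    then show ?thesis unfolding n_def by (metis Ints_cases floor_of_int of_int_0_le_iff of_nat_nat)
  qed
  obtain xs where "mset xs = (\<Sum>a\<in>UNIV. replicate_mset (n a) a)"
    using ex_mset by blast
  then have count: "count_list xs a = n a" for a
    by (simp add: count_sum flip: count_mset)
  have "real (length xs) = (\<Sum>a\<in>UNIV. real N * lam $ a)"
    by (simp flip: sum_count_list_UNIV n add: count)
  also have "\<dots> = real N"
    using lam by (simp add: prob_meas_grid_def prob_meas_def flip: sum_distrib_left)
  finally have "length xs = N" by simp
  moreover have "empirical_meas N xs = lam"
    using N by (simp add: vec_eq_iff empirical_meas_def count n)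
  ultimately show ?thesis by blast
qed

lemma finite_prob_meas_grid:
  assumes "N \<ge> 1"
  shows "finite (prob_meas_grid N :: (real^'a::finite) set)"
proof (rule finite_subset)
  show "prob_meas_grid N \<subseteq> empirical_meas N ` {xs :: 'a list. length xs = N}"
    using ex_empirical_meas_eq[OF _ assms] by blast
qed (intro finite_imageI finite_lists_length)

lemma symmetrized_pair_meas_in_N_rep:
  fixes lam :: "real^'a::finite"
  assumes N: "N \<ge> 2" and lam: "lam \<in> prob_meas_grid N"
  shows "symmetrized_pair_meas N lam \<in> N_rep N"
proof -
  define C where "C = {xs :: 'a list. length xs = N \<and> empirical_meas N xs = lam}"
  define \<gamma> where "\<gamma> xs = (if xs \<in> C then 1 / real (card C) else 0)" for xs
  have "C \<noteq> {}" using ex_empirical_meas_eq[OF lam] N unfolding C_def by auto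
  moreover have fC: "finite C" using finite_lists_length[of N] unfolding C_def by (rule rev_finite_subset) auto
  ultimately have cC: "real (card C) > 0" by auto
  have C_eq: "{xs. length xs = N} \<inter> C = C" by (auto simp: C_def)
  have "(\<Sum>xs | length xs = N. \<gamma> xs) = 1"
    using cC unfolding \<gamma>_def by (subst sum.inter_restrict[OF finite_lists_length, symmetric]) (simp add: C_eq)
  then have "prob_meas_XN N \<gamma>" by (simp add: prob_meas_XN_def \<gamma>_def)
  moreover have "symmetric_meas N \<gamma>"
    unfolding symmetric_meas_def
  proof (intro allI impI)
    fix xs :: "'a list" and \<sigma> assume "length xs = N" "\<sigma> permutes {..<N}"
    then show "\<gamma> (map (\<lambda>k. xs ! \<sigma> k) [0..<N]) = \<gamma> xs"
      using empirical_meas_permute_list[of \<sigma> xs N]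
      by (simp add: \<gamma>_def C_def permute_list_def)
  qed
  moreover have "symmetrized_pair_meas N lam = two_point_marginal N \<gamma>"
  proof -
    have "two_point_marginal N \<gamma>
        = (\<Sum>xs | length xs = N. \<gamma> xs *\<^sub>R symmetrized_pair_meas N (empirical_meas N xs))"
      by (rule two_point_marginal_symmetric[OF \<open>symmetric_meas N \<gamma>\<close> N])
    also have "\<dots> = (\<Sum>xs | length xs = N. \<gamma> xs *\<^sub>R symmetrized_pair_meas N lam)"
      by (intro sum.cong refl) (simp add: \<gamma>_def C_def)
    also have "\<dots> = symmetrized_pair_meas N lam"
      using \<open>(\<Sum>xs | length xs = N. \<gamma> xs) = 1\<close> by (simp flip: scaleR_sum_left)
    finally show ?thesis by (rule sym)
  qed
  ultimately show ?thesis unfolding N_rep_def by blast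
qed

lemma convex_N_rep: "convex (N_rep N)"
  unfolding convex_def
proof (intro ballI allI impI)
  fix x y :: "real^('a \<times> 'a)" and u v :: real
  assume "x \<in> N_rep N" "y \<in> N_rep N" and uv: "0 \<le> u" "0 \<le> v" "u + v = 1"
  then obtain \<gamma>1 \<gamma>2
    where \<gamma>1: "prob_meas_XN N \<gamma>1" "symmetric_meas N \<gamma>1" "x = two_point_marginal N \<gamma>1"
      and \<gamma>2: "prob_meas_XN N \<gamma>2" "symmetric_meas N \<gamma>2" "y = two_point_marginal N \<gamma>2"
    unfolding N_rep_def by blast
  define \<gamma> where "\<gamma> xs = u * \<gamma>1 xs + v * \<gamma>2 xs" for xs
  have "prob_meas_XN N \<gamma>"
    using \<gamma>1(1) \<gamma>2(1) uv by (simp add: prob_meas_XN_def \<gamma>_def sum.distrib flip: sum_distrib_left)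
  moreover have "symmetric_meas N \<gamma>"
    using \<gamma>1(2) \<gamma>2(2) by (simp add: symmetric_meas_def \<gamma>_def)
  moreover have "u *\<^sub>R x + v *\<^sub>R y = two_point_marginal N \<gamma>"
    using \<gamma>1(3) \<gamma>2(3)
    by (simp add: vec_eq_iff two_point_marginal_def \<gamma>_def sum.distrib sum_distrib_left)
  ultimately show "u *\<^sub>R x + v *\<^sub>R y \<in> N_rep N" unfolding N_rep_def by blast
qed

lemma N_rep_eq_convex_hull:
  assumes N: "N \<ge> 2"
  shows "N_rep N = convex hull (symmetrized_pair_meas N ` prob_meas_grid N :: (real^('a::finite \<times> 'a)) set)"
    (is "_ = convex hull ?P")
proof
  show "convex hull ?P \<subseteq> N_rep N"
    using symmetrized_pair_meas_in_N_rep[OF N] convex_N_rep by (intro hull_minimal) auto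
  show "N_rep N \<subseteq> convex hull ?P"
  proof
    fix mu :: "real^('a \<times> 'a)" assume "mu \<in> N_rep N"
    then obtain \<gamma> where \<gamma>: "prob_meas_XN N \<gamma>" "symmetric_meas N \<gamma>" "mu = two_point_marginal N \<gamma>"
      unfolding N_rep_def by blast
    have "mu = (\<Sum>xs | length xs = N. \<gamma> xs *\<^sub>R symmetrized_pair_meas N (empirical_meas N xs))"
      using two_point_marginal_symmetric[OF \<gamma>(2) N] \<gamma>(3) by simp
    also have "\<dots> \<in> convex hull ?P"
      using \<gamma>(1) N finite_lists_length
      by (intro convex_sum) (auto simp: prob_meas_XN_def intro!: hull_inc empirical_meas_in_prob_meas_grid)
    finally show "mu \<in> convex hull ?P" .
  qed
qed

lemma extreme_point_of_convex_hull_exposed: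
  fixes S :: "'a::real_inner set"
  assumes "finite S" "x \<in> S" and exposed: "\<And>y. y \<in> S \<Longrightarrow> y \<noteq> x \<Longrightarrow> w \<bullet> x < w \<bullet> y"
  shows "x extreme_point_of (convex hull S)"
proof -
  have "convex hull (S - {x}) \<subseteq> {y. w \<bullet> x < w \<bullet> y}"
    using exposed by (intro hull_minimal convex_halfspace_gt) auto
  then have "x \<notin> convex hull (S - {x})" by auto
  then have "x extreme_point_of (convex hull (insert x (S - {x})))"
    using assms(1) by (intro extreme_point_of_convex_hull_insert) auto
  then show ?thesis using assms(2) by (simp add: insert_absorb)
qed

lemma symmetrized_pair_meas_apply:
  "symmetrized_pair_meas N lam $ (i, j)
    = (1 + 1 / (real N - 1)) * lam $ i * lam $ j - (if i = j then lam $ i else 0) / (real N - 1)"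
  by (simp add: symmetrized_pair_meas_def algebra_simps)

lemma symmetrized_pair_meas_row_sum:
  assumes "lam \<in> prob_meas"
  shows "(\<Sum>j\<in>UNIV. symmetrized_pair_meas N lam $ (i, j)) = lam $ i"
proof -
  have "(\<Sum>j\<in>UNIV. symmetrized_pair_meas N lam $ (i, j))
      = (1 + 1 / (real N - 1)) * lam $ i * (\<Sum>j\<in>UNIV. lam $ j) - lam $ i / (real N - 1)"
    by (simp add: symmetrized_pair_meas_apply sum_subtractf flip: sum_distrib_left sum_divide_distrib)
  also have "(\<Sum>j\<in>UNIV. lam $ j) = 1" using assms by (simp add: prob_meas_def)
  finally show ?thesis by (simp add: algebra_simps)
qed

definition exposing_functional :: "nat \<Rightarrow> real^'a::finite \<Rightarrow> real^('a \<times> 'a)" where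
  "exposing_functional N lam0 =
     (\<chi> p. of_bool (fst p = snd p) - 2 * (1 + 1 / (real N - 1)) * lam0 $ fst p)"

lemma inner_exposing_functional:
  fixes N :: nat and lam lam0 :: "real^'a::finite"
  assumes lam: "lam \<in> prob_meas"
  defines "c \<equiv> 1 + 1 / (real N - 1)"
  shows "exposing_functional N lam0 \<bullet> symmetrized_pair_meas N lam
    = c * (\<Sum>i\<in>UNIV. (lam $ i - lam0 $ i)\<^sup>2) - c * (\<Sum>i\<in>UNIV. (lam0 $ i)\<^sup>2) - (c - 1)"
proof -
  let ?M = "symmetrized_pair_meas N lam"
  have "exposing_functional N lam0 \<bullet> ?M
      = (\<Sum>p\<in>UNIV. (of_bool (fst p = snd p) - 2 * c * lam0 $ fst p) * ?M $ p)"
    by (simp add: inner_vec_def exposing_functional_def c_def)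
  also have "\<dots> = (\<Sum>i\<in>UNIV. \<Sum>j\<in>UNIV. (of_bool (i = j) - 2 * c * lam0 $ i) * ?M $ (i, j))"
    by (simp add: sum.cartesian_product case_prod_unfold)
  also have "\<dots> = (\<Sum>i\<in>UNIV. ?M $ (i, i) - 2 * c * lam0 $ i * (\<Sum>j\<in>UNIV. ?M $ (i, j)))"
    by (simp add: left_diff_distrib sum_subtractf sum_distrib_left mult.assoc)
  also have "\<dots> = (\<Sum>i\<in>UNIV. c * (lam $ i)\<^sup>2 - (c - 1) * lam $ i - 2 * c * lam0 $ i * lam $ i)"
    unfolding symmetrized_pair_meas_row_sum[OF lam]
    by (simp add: symmetrized_pair_meas_apply c_def power2_eq_square algebra_simps)
  also have "\<dots> = c * (\<Sum>i\<in>UNIV. (lam $ i - lam0 $ i)\<^sup>2) - c * (\<Sum>i\<in>UNIV. (lam0 $ i)\<^sup>2) - (c - 1)"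
    using lam
    by (simp add: prob_meas_def power2_diff sum_subtractf sum.distrib algebra_simps
        flip: sum_distrib_left)
  finally show ?thesis .
qed

lemma symmetrized_pair_meas_exposed:
  fixes lam lam0 :: "real^'a::finite"
  assumes "N \<ge> 2" "lam \<in> prob_meas" "lam0 \<in> prob_meas" "lam \<noteq> lam0"
  shows "exposing_functional N lam0 \<bullet> symmetrized_pair_meas N lam0
    < exposing_functional N lam0 \<bullet> symmetrized_pair_meas N lam"
proof -
  obtain i where "lam $ i \<noteq> lam0 $ i" using assms(4) by (auto simp: vec_eq_iff)
  then have "0 < (\<Sum>i\<in>UNIV. (lam $ i - lam0 $ i)\<^sup>2)"
    by (intro sum_pos2[where i = i]) auto
  moreover have "0 < 1 + 1 / (real N - 1)" using assms(1) by (simp add: add_pos_nonneg)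
  ultimately show ?thesis
    using assms(2,3) by (simp add: inner_exposing_functional)
qed

theorem theorem2p2:
  fixes N :: nat and mu :: "real^('a::finite \<times> 'a)"
  assumes "N \<ge> 2"
  shows "mu extreme_point_of (N_rep N) \<longleftrightarrow>
    (\<exists>lam \<in> prob_meas_grid N.
       mu = (\<chi> p. lam $ fst p * lam $ snd p
                + (1 / (real N - 1)) * (lam $ fst p * lam $ snd p
                    - (if fst p = snd p then lam $ fst p else 0))))"
proof -
  let ?P = "symmetrized_pair_meas N ` prob_meas_grid N :: (real^('a \<times> 'a)) set"
  have hull: "N_rep N = convex hull ?P" by (rule N_rep_eq_convex_hull[OF assms])
  have "mu extreme_point_of (convex hull ?P) \<longleftrightarrow> mu \<in> ?P"
  proof
    assume "mu \<in> ?P"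
    then obtain lam where lam: "lam \<in> prob_meas_grid N" "mu = symmetrized_pair_meas N lam" by blast
    show "mu extreme_point_of (convex hull ?P)"
    proof (rule extreme_point_of_convex_hull_exposed)
      show "finite ?P" using assms by (intro finite_imageI finite_prob_meas_grid) simp
      fix y assume "y \<in> ?P" "y \<noteq> mu"
      then obtain lam' where "lam' \<in> prob_meas_grid N" "y = symmetrized_pair_meas N lam'" "lam' \<noteq> lam"
        using lam by blast
      then show "exposing_functional N lam \<bullet> mu < exposing_functional N lam \<bullet> y"
        using symmetrized_pair_meas_exposed[of N lam' lam] assms lam by (auto simp: prob_meas_grid_def)
    qed (use lam in blast)
  qed (rule extreme_point_of_convex_hull)
  then show ?thesis unfolding hull by (simp add: symmetrized_pair_meas_def image_iff)
qed

end
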